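(* Let $p\ge 2$ and $q$ be coprime integers, $I_1,I_3>0$, $\eta=I_1/I_3-1$. For every $h\in C$ define $$t_{\max}(h)=\frac{2I_1\,\min\big(\pi,\tau_\ell(\bar h_3)\big)}{|h|}.$$ Then $t_{\max}(h)\le t_{\mathrm{conj}}(h)$ for every $h\in C$, where $t_{\mathrm{conj}}(h)$ is the first conjugate time along the unit-speed geodesic $\gamma_h$ (i.e., the smallest $t>0$ such that $\gamma_h(t)$ is conjugate to $\gamma_h(0)$ along $\gamma_h$, or $+\infty$ if none).
   Context: Identify $S^3=\{(z,w)\in\mathbb{C}^2:|z|^2+|w|^2=1\}$ with $\mathrm{SU}_2$ via $(z,w)\mapsto\begin{pmatrix} z& w\\ -\bar w&\bar z\end{pmatrix}$, write $z=q_0+iq_3$, $w=q_1+iq_2$. The basis of $\mathfrak{su}_2$ is $e_1=\frac12\begin{pmatrix}0&1\\-1&0\end{pmatrix}$, $e_2=\frac12\begin{pmatrix}0&i\\ i&0\end{pmatrix}$, $e_3=\frac12\begin{pmatrix}i&0\\0&-i\end{pmatrix}$. The metric $g$ is the left-invariant metric on $\mathrm{SU}_2$ equal to $I_1u_1^2+I_1u_2^2+I_3u_3^2$ at the identity on $u_1e_1+u_2e_2+u_3e_3$; it is invariant under the $\mathbb{Z}_p$-action $[k]\cdot(z,w)=(e^{2\pi ik/p}z,e^{2\pi ikq/p}w)$, so it descends to $L(p;q)=S^3/\mathbb{Z}_p$ (projection $\Pi$); conjugate points along a geodesic are the same upstairs and downstairs. Let $C=\{h=(h_1,h_2,h_3)\in\mathfrak{su}_2^*: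 \frac{h_1^2+h_2^2}{I_1}+\frac{h_3^2}{I_3}=1\}$ (coordinates in the dual basis); each $h\in C$ determines the arclength-parametrized geodesic $\gamma_h$ of $(\mathrm{SU}_2,g)$ from the identity (the projection of the Hamiltonian flow of $H=\frac12(\frac{h_1^2+h_2^2}{I_1}+\frac{h_3^2}{I_3})$ starting at $h$). Put $|h|=\sqrt{h_1^2+h_2^2+h_3^2}$, $\bar h_i=h_i/|h|$, $\tau=2I_1t/|h|$; note $|h|=\sqrt{I_1}/\sqrt{1+\eta\bar h_3^2}$. Along $\gamma_h$: $q_0=\cos\tau\cos(\tau\eta\bar h_3)-\bar h_3\sin\tau\sin(\tau\eta\bar h_3)$, $q_3=\cos\tau\sin(\tau\eta\bar h_3)+\bar h_3\sin\tau\cos(\tau\eta\bar h_3)$. Define $\ell_\mp(\tau,s)=\cos\tau\sin(\tau\eta s\mp\frac{\pi}{p})+s\sin\tau\cos(\tau\eta s\mp\frac{\pi}{p})$ (these equal $q_3\cos\frac\pi p\mp q_0\sin\frac\pi p$ along $\gamma_h$ with $s=\bar h_3$), let $\tau_\ell^\mp(s)$ be the smallest positive root in $\tau$ of $\ell_\mp(\tau,s)=0$ and $\tau_\ell(s)=\min(\tau_\ell^-(s),\tau_\ell^+(s))$. *)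

theory Defs
  imports "HOL-Analysis.Analysis"
begin

text \<open>2x2 complex matrices; SU(2) is represented inside complex^2^2.\<close>

definition mat2 :: "complex \<Rightarrow> complex \<Rightarrow> complex \<Rightarrow> complex \<Rightarrow> complex^2^2" where
  "mat2 a b c d = (\<chi> i j. if i = 1 then (if j = 1 then a else b) else (if j = 1 then c else d))"

definition su2_e1 :: "complex^2^2" where "su2_e1 = mat2 0 (1/2) (-1/2) 0"
definition su2_e2 :: "complex^2^2" where "su2_e2 = mat2 0 (\<i>/2) (\<i>/2) 0"
definition su2_e3 :: "complex^2^2" where "su2_e3 = mat2 (\<i>/2) 0 0 (-\<i>/2)"

text \<open>Velocity u = dH(h) in su(2) for the Hamiltonian
  H = 1/2 ((h1^2+h2^2)/I1 + h3^2/I3); coordinates h$1,h$2,h$3 w.r.t. the dual basis.\<close>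
definition vel :: "real \<Rightarrow> real \<Rightarrow> real^3 \<Rightarrow> real^3" where
  "vel I1 I3 h = vector [h$1 / I1, h$2 / I1, h$3 / I3]"

definition vel_mat :: "real \<Rightarrow> real \<Rightarrow> real^3 \<Rightarrow> complex^2^2" where
  "vel_mat I1 I3 h = (let u = vel I1 I3 h in
     (u$1) *\<^sub>R su2_e1 + (u$2) *\<^sub>R su2_e2
     + (u$3) *\<^sub>R su2_e3)"

text \<open>Coadjoint term ad*_u h, <ad*_u h, X> = <h,[u,X]>, with [e1,e2]=e3 etc.\<close>
definition coad :: "real^3 \<Rightarrow> real^3 \<Rightarrow> real^3" where
  "coad u h = vector [h$2 * u$3 - h$3 * u$2, h$3 * u$1 - h$1 * u$3, h$1 * u$2 - h$2 * u$1]"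

text \<open>Hamiltonian flow of H on T*SU2 = SU2 x su2*, left trivialization, starting at (Id, lam):
  g' = g u, h' = ad*_u h, u = dH(h).\<close>
definition ham_traj :: "real \<Rightarrow> real \<Rightarrow> real^3 \<Rightarrow> (real \<Rightarrow> (complex^2^2) \<times> (real^3)) \<Rightarrow> bool" where
  "ham_traj I1 I3 lam \<gamma> \<longleftrightarrow> \<gamma> 0 = (mat 1, lam) \<and>
     (\<forall>s. (\<gamma> has_vector_derivative
            (fst (\<gamma> s) ** vel_mat I1 I3 (snd (\<gamma> s)), coad (vel I1 I3 (snd (\<gamma> s))) (snd (\<gamma> s)))) (at s))"

definition Exp_map :: "real \<Rightarrow> real \<Rightarrow> real \<Rightarrow> real^3 \<Rightarrow> complex^2^2" where
  "Exp_map I1 I3 t lam = fst ((THE \<gamma>. ham_traj I1 I3 lam \<gamma>) t)"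

text \<open>t > 0 is a conjugate time along gamma_h iff h is a critical point of Exp_t.\<close>
definition conjugate_time :: "real \<Rightarrow> real \<Rightarrow> real^3 \<Rightarrow> real \<Rightarrow> bool" where
  "conjugate_time I1 I3 h t \<longleftrightarrow> t > 0 \<and>
     \<not> (\<exists>D. (Exp_map I1 I3 t has_derivative D) (at h) \<and> inj D)"

definition C_set :: "real \<Rightarrow> real \<Rightarrow> (real^3) set" where
  "C_set I1 I3 = {h. ((h$1)^2 + (h$2)^2) / I1 + (h$3)^2 / I3 = 1}"

definition ell_minus :: "real \<Rightarrow> int \<Rightarrow> real \<Rightarrow> real \<Rightarrow> real" where
  "ell_minus \<eta> p \<tau> s = cos \<tau> * sin (\<tau> * \<eta> * s - pi / p) + s * sin \<tau> * cos (\<tau> * \<eta> * s - pi / p)"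

definition ell_plus :: "real \<Rightarrow> int \<Rightarrow> real \<Rightarrow> real \<Rightarrow> real" where
  "ell_plus \<eta> p \<tau> s = cos \<tau> * sin (\<tau> * \<eta> * s + pi / p) + s * sin \<tau> * cos (\<tau> * \<eta> * s + pi / p)"

definition first_pos_root :: "(real \<Rightarrow> real) \<Rightarrow> ereal" where
  "first_pos_root f = Inf (ereal ` {\<tau>. \<tau> > 0 \<and> f \<tau> = 0})"

definition tau_ell :: "real \<Rightarrow> int \<Rightarrow> real \<Rightarrow> ereal" where
  "tau_ell \<eta> p s = min (first_pos_root (\<lambda>\<tau>. ell_minus \<eta> p \<tau> s))
                        (first_pos_root (\<lambda>\<tau>. ell_plus \<eta> p \<tau> s))"

definition t_max :: "real \<Rightarrow> real \<Rightarrow> int \<Rightarrow> real^3 \<Rightarrow> ereal" where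
  "t_max I1 I3 p h = (let \<eta> = I1 / I3 - 1; hb3 = h$3 / norm h in
     ereal (2 * I1 / norm h) * min (ereal pi) (tau_ell \<eta> p hb3))"

end

theory Submission
  imports Defs
begin

(*
  For the metric diag (I1, I1, I3) the geodesics
  are explicit: the momentum precesses about the third axis with angular velocity
  h3 (1/I3 - 1/I1), and in the frame co-rotating at half that rate the geodesic is a one-parameter
  subgroup of the bi-invariant metric. With tau = t |h| / (2 I1) and phi = t h3 (1/I3 - 1/I1) / 2,
    z = (cos tau + i h3/|h| sin tau) e^(i phi),   w = sin tau (h1 + i h2)/|h| e^(-i phi).
  Differentiating in h shows that d Exp_t is injective as soon as sin tau and
    F = (1 + eta h3^2/|h|^2) sin tau + eta (1 - h3^2/|h|^2) tau cos tau
  are nonzero. Both are positive for 0 < tau < pi: if eta <= 0 because tau cos tau < sin tau, and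
  if eta > 0 because then tau < tau_l <= pi/2, a root of l_- or l_+ in (0, pi/2] being supplied by
  the intermediate value theorem.
*)

lemma has_vector_derivative_cis [derivative_intros]:
  assumes "(f has_real_derivative f') (at x within S)"
  shows "((\<lambda>x. cis (f x)) has_vector_derivative \<i> * of_real f' * cis (f x)) (at x within S)"
  using has_derivative_cis[OF assms[unfolded has_field_derivative_def]]
  by (simp add: has_vector_derivative_def scaleR_conv_of_real algebra_simps)

lemma has_vector_derivative_vec_componentwise:
  fixes f :: "real \<Rightarrow> real^'n"
  assumes "\<And>i. ((\<lambda>s. f s $ i) has_real_derivative f' $ i) (at s)"
  shows "(f has_vector_derivative f') (at s)"
proof -
  have "((\<lambda>s. f s $ i) has_derivative (\<lambda>x. x * f' $ i)) (at s)" for i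
    using assms[of i] unfolding has_field_derivative_def by (subst mult_commute_abs)
  then show ?thesis
    unfolding has_vector_derivative_def
    by (subst has_derivative_componentwise_within) (auto simp: Basis_vec_def inner_axis)
qed

lemma has_real_derivative_vec_nth:
  fixes f :: "real \<Rightarrow> real^'n"
  assumes "(f has_vector_derivative f') (at s)"
  shows "((\<lambda>s. f s $ i) has_real_derivative f' $ i) (at s)"
  using bounded_linear.has_vector_derivative[OF bounded_linear_vec_nth assms]
  by (simp add: has_real_derivative_iff_has_vector_derivative)

lemma has_derivative_norm_at:
  assumes "h \<noteq> 0"
  shows "(norm has_derivative (\<lambda>v. inner h v / norm h)) (at h)"
  using has_derivative_norm[OF assms] by (simp add: sgn_div_norm inner_commute divide_inverse mult.commute)

lemma has_derivative_complex_cis: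
  fixes P Q \<phi> :: "'a::real_normed_vector \<Rightarrow> real"
  assumes "(P has_derivative P') (at h)" "(Q has_derivative Q') (at h)" "(\<phi> has_derivative \<phi>') (at h)"
  shows "((\<lambda>l. (of_real (P l) + \<i> * of_real (Q l)) * cis (\<phi> l)) has_derivative
    (\<lambda>v. (of_real (P' v - Q h * \<phi>' v) + \<i> * of_real (Q' v + P h * \<phi>' v)) * cis (\<phi> h))) (at h)"
  by (rule derivative_eq_intros assms refl | simp)+
     (simp add: fun_eq_iff scaleR_conv_of_real algebra_simps)

section \<open>SU(2) and su(2) as complex 2 x 2 matrices\<close>

lemma mat2_eq_iff: "mat2 a b c d = mat2 a' b' c' d' \<longleftrightarrow> a = a' \<and> b = b' \<and> c = c' \<and> d = d'"
  by (auto simp: mat2_def vec_eq_iff forall_2)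

lemma mat2_entries: "mat2 (M $ 1 $ 1) (M $ 1 $ 2) (M $ 2 $ 1) (M $ 2 $ 2) = M"
  by (simp add: mat2_def vec_eq_iff forall_2)

lemma mat2_mult:
  "mat2 a b c d ** mat2 a' b' c' d' = mat2 (a*a' + b*c') (a*b' + b*d') (c*a' + d*c') (c*b' + d*d')"
  by (simp add: mat2_def matrix_matrix_mult_def vec_eq_iff forall_2 sum_2)

lemma mat2_add: "mat2 a b c d + mat2 a' b' c' d' = mat2 (a+a') (b+b') (c+c') (d+d')"
  by (simp add: mat2_def vec_eq_iff forall_2)

lemma mat2_scaleR: "r *\<^sub>R mat2 a b c d = mat2 (r *\<^sub>R a) (r *\<^sub>R b) (r *\<^sub>R c) (r *\<^sub>R d)"
  by (simp add: mat2_def vec_eq_iff forall_2)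

lemma inner_mat2:
  "inner (mat2 a b c d) (mat2 a' b' c' d') = inner a a' + inner b b' + inner c c' + inner d d'"
  by (simp add: inner_vec_def sum_2 mat2_def)

lemma linear_mat2: "linear (\<lambda>(a, b, c, d). mat2 a b c d)"
  by (rule linearI) (auto simp: mat2_add mat2_scaleR)

text \<open>For \<open>|z|\<^sup>2 + |w|\<^sup>2 = 1\<close> this is the identification of \<open>S\<^sup>3\<close> with \<open>SU(2)\<close>; for \<open>Re z = 0\<close> it is
  an element of \<open>su(2)\<close>.\<close>

definition su2 :: "complex \<Rightarrow> complex \<Rightarrow> complex^2^2" where
  "su2 z w = mat2 z w (- cnj w) (cnj z)"

lemma su2_eq_0_iff: "su2 z w = 0 \<longleftrightarrow> z = 0 \<and> w = 0"
  by (auto simp: su2_def mat2_def vec_eq_iff forall_2)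

lemma su2_one: "su2 1 0 = mat 1"
  by (simp add: su2_def mat2_def mat_def vec_eq_iff forall_2)

lemma su2_mult: "su2 z w ** su2 z' w' = su2 (z * z' - w * cnj w') (z * w' + w * cnj z')"
  by (simp add: su2_def mat2_mult mat2_eq_iff algebra_simps)

lemma vel_mat_eq_su2:
  "vel_mat I1 I3 h = su2 (\<i> * of_real (h$3 / (2 * I3))) (of_real (h$1 / (2 * I1)) + \<i> * of_real (h$2 / (2 * I1)))"
  unfolding vel_mat_def vel_def Let_def su2_e1_def su2_e2_def su2_e3_def su2_def
  by (simp only: mat2_scaleR mat2_add mat2_eq_iff) (simp add: scaleR_conv_of_real complex_eq_iff)

lemma mat2_has_derivative:
  assumes "(a has_derivative a') (at x within S)" "(b has_derivative b') (at x within S)"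
    "(c has_derivative c') (at x within S)" "(d has_derivative d') (at x within S)"
  shows "((\<lambda>x. mat2 (a x) (b x) (c x) (d x)) has_derivative (\<lambda>v. mat2 (a' v) (b' v) (c' v) (d' v))) (at x within S)"
proof -
  have "bounded_linear (\<lambda>(a, b, c, d). mat2 a b c d)"
    by (simp add: linear_conv_bounded_linear[symmetric] linear_mat2)
  from bounded_linear.has_derivative[OF this has_derivative_Pair[OF assms(1) has_derivative_Pair[OF assms(2)
        has_derivative_Pair[OF assms(3,4)]]]]
  show ?thesis by simp
qed

lemma su2_has_derivative:
  assumes "(z has_derivative z') (at x within S)" "(w has_derivative w') (at x within S)"
  shows "((\<lambda>x. su2 (z x) (w x)) has_derivative (\<lambda>v. su2 (z' v) (w' v))) (at x within S)"
  unfolding su2_def by (intro mat2_has_derivative has_derivative_minus has_derivative_cnj assms)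

lemma su2_has_vector_derivative:
  assumes "(z has_vector_derivative z') (at x within S)" "(w has_vector_derivative w') (at x within S)"
  shows "((\<lambda>x. su2 (z x) (w x)) has_vector_derivative su2 z' w') (at x within S)"
  using su2_has_derivative[OF assms[unfolded has_vector_derivative_def]]
  by (simp only: has_vector_derivative_def su2_def mat2_scaleR) (simp add: scaleR_conv_of_real)

lemma inner_mult_su2_skew:
  fixes M :: "complex^2^2"
  assumes "Re \<alpha> = 0"
  shows "inner M (M ** su2 \<alpha> \<beta>) = 0"
proof -
  obtain r where \<alpha>: "\<alpha> = \<i> * of_real r"
    using assms by (intro that[of "Im \<alpha>"]) (simp add: complex_eq_iff)
  have row: "inner x (x * \<alpha> - y * cnj \<beta>) + inner y (x * \<beta> + y * cnj \<alpha>) = 0" for x y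
    unfolding \<alpha> inner_complex_def by simp algebra
  have "inner (mat2 a b c d) (mat2 a b c d ** su2 \<alpha> \<beta>) = 0" for a b c d
  proof -
    have "mat2 a b c d ** su2 \<alpha> \<beta>
        = mat2 (a * \<alpha> - b * cnj \<beta>) (a * \<beta> + b * cnj \<alpha>) (c * \<alpha> - d * cnj \<beta>) (c * \<beta> + d * cnj \<alpha>)"
      by (simp add: su2_def mat2_mult)
    then show ?thesis
      using row[of a b] row[of c d] by (simp add: inner_mat2)
  qed
  then show ?thesis
    using mat2_entries[of M] by metis
qed

text \<open>Right multiplication by a skew-adjoint \<open>U s\<close> preserves the Frobenius norm, so the difference of
  two solutions with equal initial values stays zero.\<close>

lemma skew_linear_ode_unique:
  fixes G H :: "real \<Rightarrow> complex^'n^'n" and U :: "real \<Rightarrow> complex^'n^'n"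
  assumes skew: "\<And>s (M :: complex^'n^'n). inner M (M ** U s) = 0"
    and G: "\<And>s. (G has_vector_derivative G s ** U s) (at s)"
    and H: "\<And>s. (H has_vector_derivative H s ** U s) (at s)"
    and init: "G 0 = H 0"
  shows "G s = H s"
proof -
  define D where "D = (\<lambda>s. G s - H s)"
  have "(A - B) ** C = A ** C - B ** C" for A B C :: "complex^'n^'n"
    by (simp add: matrix_matrix_mult_def vec_eq_iff sum_subtractf algebra_simps)
  then have D': "(D has_vector_derivative D s ** U s) (at s)" for s
    unfolding D_def by (metis has_vector_derivative_diff[OF G H])
  have "((\<lambda>s. inner (D s) (D s)) has_real_derivative 0) (at s)" for s
    using has_derivative_inner[OF D'[of s, unfolded has_vector_derivative_def] D'[of s, unfolded has_vector_derivative_def]]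
    by (simp add: has_real_derivative_iff_has_vector_derivative has_vector_derivative_def
        inner_commute[of "D s ** U s"] skew)
  then have "inner (D s) (D s) = inner (D 0) (D 0)"
    by (rule DERIV_isconst_all[rule_format])
  also have "\<dots> = 0"
    using init by (simp add: D_def)
  finally show ?thesis
    unfolding D_def by simp
qed

section \<open>The momentum precesses about the symmetry axis\<close>

lemma ham_traj_has_vector_derivative:
  assumes "ham_traj I1 I3 l \<gamma>"
  shows "((\<lambda>s. fst (\<gamma> s)) has_vector_derivative fst (\<gamma> s) ** vel_mat I1 I3 (snd (\<gamma> s))) (at s)"
    and "((\<lambda>s. snd (\<gamma> s)) has_vector_derivative coad (vel I1 I3 (snd (\<gamma> s))) (snd (\<gamma> s))) (at s)"
proof -
  have "(\<gamma> has_vector_derivative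
      (fst (\<gamma> s) ** vel_mat I1 I3 (snd (\<gamma> s)), coad (vel I1 I3 (snd (\<gamma> s))) (snd (\<gamma> s)))) (at s)"
    using assms by (simp add: ham_traj_def)
  from bounded_linear.has_vector_derivative[OF bounded_linear_fst this]
    bounded_linear.has_vector_derivative[OF bounded_linear_snd this]
  show "((\<lambda>s. fst (\<gamma> s)) has_vector_derivative fst (\<gamma> s) ** vel_mat I1 I3 (snd (\<gamma> s))) (at s)"
    and "((\<lambda>s. snd (\<gamma> s)) has_vector_derivative coad (vel I1 I3 (snd (\<gamma> s))) (snd (\<gamma> s))) (at s)"
    by simp_all
qed

definition precession_rate :: "real \<Rightarrow> real \<Rightarrow> real^3 \<Rightarrow> real" where
  "precession_rate I1 I3 l = l$3 * (1/I3 - 1/I1)"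

definition momentum :: "real \<Rightarrow> real \<Rightarrow> real^3 \<Rightarrow> real \<Rightarrow> real^3" where
  "momentum I1 I3 l s = (let \<phi> = precession_rate I1 I3 l * s in
     vector [l$1 * cos \<phi> + l$2 * sin \<phi>, - l$1 * sin \<phi> + l$2 * cos \<phi>, l$3])"

lemma momentum_nth:
  "momentum I1 I3 l s $ 1 = l$1 * cos (precession_rate I1 I3 l * s) + l$2 * sin (precession_rate I1 I3 l * s)"
  "momentum I1 I3 l s $ 2 = - l$1 * sin (precession_rate I1 I3 l * s) + l$2 * cos (precession_rate I1 I3 l * s)"
  "momentum I1 I3 l s $ 3 = l$3"
  by (simp_all add: momentum_def Let_def)

lemma momentum_0: "momentum I1 I3 l 0 = l"
  by (simp add: momentum_nth vec_eq_iff forall_3)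

lemma momentum_complex:
  "of_real (momentum I1 I3 l s $ 1) + \<i> * of_real (momentum I1 I3 l s $ 2)
     = (of_real (l$1) + \<i> * of_real (l$2)) * cis (- (precession_rate I1 I3 l * s))"
  by (simp add: momentum_nth complex_eq_iff)

lemma coad_vel_nth:
  "coad (vel I1 I3 h) h $ 1 = h$2 * h$3 * (1/I3 - 1/I1)"
  "coad (vel I1 I3 h) h $ 2 = - h$1 * h$3 * (1/I3 - 1/I1)"
  "coad (vel I1 I3 h) h $ 3 = 0"
  by (simp_all add: coad_def vel_def vector_3 algebra_simps)

lemma momentum_has_vector_derivative:
  "(momentum I1 I3 l has_vector_derivative coad (vel I1 I3 (momentum I1 I3 l s)) (momentum I1 I3 l s)) (at s)"
proof (rule has_vector_derivative_vec_componentwise)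
  fix i :: 3
  define c where "c = precession_rate I1 I3 l"
  have "((\<lambda>s. momentum I1 I3 l s $ 1) has_real_derivative c * momentum I1 I3 l s $ 2) (at s)"
    unfolding momentum_nth c_def[symmetric]
    by (rule derivative_eq_intros refl | simp)+ (simp add: algebra_simps)
  moreover have "((\<lambda>s. momentum I1 I3 l s $ 2) has_real_derivative - c * momentum I1 I3 l s $ 1) (at s)"
    unfolding momentum_nth c_def[symmetric]
    by (rule derivative_eq_intros refl | simp)+ (simp add: algebra_simps)
  moreover have "i = 1 \<or> i = 2 \<or> i = 3"
    by (rule exhaust_3)
  moreover have "coad (vel I1 I3 (momentum I1 I3 l s)) (momentum I1 I3 l s) $ 1 = c * momentum I1 I3 l s $ 2"
    "coad (vel I1 I3 (momentum I1 I3 l s)) (momentum I1 I3 l s) $ 2 = - c * momentum I1 I3 l s $ 1"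
    "coad (vel I1 I3 (momentum I1 I3 l s)) (momentum I1 I3 l s) $ 3 = 0"
    unfolding coad_vel_nth momentum_nth(3) c_def precession_rate_def by (simp_all add: algebra_simps)
  ultimately show "((\<lambda>s. momentum I1 I3 l s $ i) has_real_derivative
      coad (vel I1 I3 (momentum I1 I3 l s)) (momentum I1 I3 l s) $ i) (at s)"
    by (auto simp: momentum_nth(3))
qed

text \<open>The third component is conserved; then the squared distance of the first two components to
  the explicit rotation is a first integral vanishing at time 0.\<close>

lemma ham_traj_momentum:
  assumes "ham_traj I1 I3 l \<gamma>"
  shows "snd (\<gamma> s) = momentum I1 I3 l s"
proof -
  define h where "h s = snd (\<gamma> s)" for s
  have h0: "h 0 = l"
    using assms by (simp add: ham_traj_def h_def)
  have h': "((\<lambda>s. h s $ k) has_real_derivative coad (vel I1 I3 (h s)) (h s) $ k) (at s)" for s k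
    unfolding h_def by (rule has_real_derivative_vec_nth ham_traj_has_vector_derivative(2)[OF assms])+
  have h3: "h s $ 3 = l$3" for s
    using DERIV_isconst_all[of "\<lambda>s. h s $ 3" s 0] h'[where k=3] h0 by (simp add: coad_vel_nth)
  define c where "c = precession_rate I1 I3 l"
  define m where "m = momentum I1 I3 l"
  define E where "E = (\<lambda>s. (h s $ 1 - m s $ 1)^2 + (h s $ 2 - m s $ 2)^2)"
  have "(E has_real_derivative 0) (at s)" for s
  proof -
    have h1': "((\<lambda>s. h s $ 1) has_real_derivative c * h s $ 2) (at s)"
      and h2': "((\<lambda>s. h s $ 2) has_real_derivative - c * h s $ 1) (at s)"
      using h'[where k=1] h'[where k=2] by (simp_all add: coad_vel_nth h3 c_def precession_rate_def algebra_simps)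
    show ?thesis
      unfolding E_def m_def momentum_nth c_def[symmetric]
      by (rule derivative_eq_intros h1' h2' refl | simp)+ (simp add: algebra_simps)
  qed
  then have "E s = E 0"
    by (rule DERIV_isconst_all[rule_format])
  then have "E s = 0"
    using h0 by (simp add: E_def m_def momentum_0)
  then have "h s $ 1 = m s $ 1" "h s $ 2 = m s $ 2"
    unfolding E_def by (simp_all add: sum_power2_eq_zero_iff)
  with h3[of s] show ?thesis
    unfolding h_def m_def vec_eq_iff forall_3 by (simp add: momentum_nth(3))
qed

section \<open>The geodesics in closed form\<close>

lemma norm_vec3_sq: "(norm (l :: real^3))\<^sup>2 = (l$1)\<^sup>2 + (l$2)\<^sup>2 + (l$3)\<^sup>2"
  by (simp add: norm_vec_def L2_set_def sum_3)

definition su2_flow ::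
    "(real \<Rightarrow> complex) \<Rightarrow> (real \<Rightarrow> complex) \<Rightarrow> (real \<Rightarrow> complex) \<Rightarrow> (real \<Rightarrow> complex) \<Rightarrow> bool" where
  "su2_flow \<alpha> \<beta> z w \<longleftrightarrow> (\<forall>s.
     (z has_vector_derivative z s * \<alpha> s - w s * cnj (\<beta> s)) (at s) \<and>
     (w has_vector_derivative z s * \<beta> s + w s * cnj (\<alpha> s)) (at s))"

lemma su2_flow_has_vector_derivative:
  assumes "su2_flow \<alpha> \<beta> z w"
  shows "((\<lambda>s. su2 (z s) (w s)) has_vector_derivative su2 (z s) (w s) ** su2 (\<alpha> s) (\<beta> s)) (at s)"
  using assms unfolding su2_flow_def su2_mult by (blast intro: su2_has_vector_derivative)

text \<open>The one-parameter subgroup \<open>s \<mapsto> exp (s \<rho> X)\<close> generated by \<open>X = su2 (\<i> n\<^sub>3) \<nu>\<close>, which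
  satisfies \<open>X\<^sup>2 = -1\<close>.\<close>

lemma su2_flow_constant:
  assumes unit: "n\<^sub>3\<^sup>2 + (cmod \<nu>)\<^sup>2 = 1"
  shows "su2_flow (\<lambda>_. \<i> * of_real (\<rho> * n\<^sub>3)) (\<lambda>_. of_real \<rho> * \<nu>)
     (\<lambda>s. of_real (cos (\<rho> * s)) + \<i> * of_real (n\<^sub>3 * sin (\<rho> * s))) (\<lambda>s. of_real (sin (\<rho> * s)) * \<nu>)"
proof -
  have "\<nu> * cnj \<nu> = of_real ((cmod \<nu>)\<^sup>2)"
    by (rule complex_norm_square[symmetric])
  also have "(cmod \<nu>)\<^sup>2 = 1 - n\<^sub>3 * n\<^sub>3"
    using unit by (simp add: power2_eq_square)
  finally have \<nu>: "\<nu> * cnj \<nu> = 1 - of_real n\<^sub>3 * of_real n\<^sub>3"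
    by simp
  show ?thesis
    unfolding su2_flow_def
    by (intro allI conjI; (rule derivative_eq_intros refl)+)
       (use \<nu> i_squared in \<open>simp only: of_real_mult of_real_minus of_real_add complex_cnj_mult
          complex_cnj_complex_of_real mult_zero_left mult_1_left add_0 add_0_right, algebra\<close>,
        simp only: of_real_mult complex_cnj_mult complex_cnj_i complex_cnj_complex_of_real
          mult_zero_left mult_zero_right mult_1_left add_0 add_0_right, algebra)
qed

text \<open>Passing to a frame rotating at rate \<open>\<omega>\<close> about the third axis.\<close>

lemma su2_flow_rotating_frame:
  assumes "su2_flow (\<lambda>_. \<alpha>) (\<lambda>_. \<beta>) z w"
  shows "su2_flow (\<lambda>_. \<alpha> + \<i> * of_real (\<omega> / 2)) (\<lambda>s. \<beta> * cis (- (\<omega> * s)))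
    (\<lambda>s. z s * cis (\<omega> * s / 2)) (\<lambda>s. w s * cis (- (\<omega> * s / 2)))"
proof -
  define u where "u s = cis (\<omega> * s / 2)" for s
  have u: "cis (\<omega> * s / 2) = u s" "cis (- (\<omega> * s / 2)) = cnj (u s)" "cis (- (\<omega> * s)) = cnj (u s) * cnj (u s)"
    and unit: "cnj (u s) * u s = 1" for s
    by (simp_all add: u_def cis_cnj cis_mult)
  have z': "(z has_vector_derivative z s * \<alpha> - w s * cnj \<beta>) (at s)"
    and w': "(w has_vector_derivative z s * \<beta> + w s * cnj \<alpha>) (at s)" for s
    using assms by (simp_all add: su2_flow_def)
  have "((\<lambda>s. \<omega> * s / 2) has_real_derivative \<omega> / 2) (at s)"
    "((\<lambda>s. - (\<omega> * s / 2)) has_real_derivative - (\<omega> / 2)) (at s)" for s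
    by (auto intro!: derivative_eq_intros)
  note dcis = this[THEN has_vector_derivative_cis]
  have "((\<lambda>s. z s * cis (\<omega> * s / 2)) has_vector_derivative
      z s * cis (\<omega> * s / 2) * (\<alpha> + \<i> * of_real (\<omega> / 2))
      - w s * cis (- (\<omega> * s / 2)) * cnj (\<beta> * cis (- (\<omega> * s)))) (at s)" for s
    by (rule has_vector_derivative_eq_rhs[OF has_vector_derivative_mult[OF z' dcis(1)]])
       (use unit[of s] in \<open>simp only: u complex_cnj_mult complex_cnj_cnj, algebra\<close>)
  moreover have "((\<lambda>s. w s * cis (- (\<omega> * s / 2))) has_vector_derivative
      z s * cis (\<omega> * s / 2) * (\<beta> * cis (- (\<omega> * s)))
      + w s * cis (- (\<omega> * s / 2)) * cnj (\<alpha> + \<i> * of_real (\<omega> / 2))) (at s)" for s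
    by (rule has_vector_derivative_eq_rhs[OF has_vector_derivative_mult[OF w' dcis(2)]])
       (use unit[of s] in \<open>simp only: u complex_cnj_mult complex_cnj_add complex_cnj_i complex_cnj_complex_of_real
          of_real_minus, algebra\<close>)
  ultimately show ?thesis
    unfolding su2_flow_def by blast
qed

text \<open>The coordinates \<open>z = q\<^sub>0 + \<i> q\<^sub>3\<close> and \<open>w = q\<^sub>1 + \<i> q\<^sub>2\<close> of the geodesic with initial
  momentum \<open>l\<close>; the angle \<open>norm l / (2 I\<^sub>1) * s\<close> is the rescaled time \<open>\<tau>\<close>.\<close>

definition geo_z :: "real \<Rightarrow> real \<Rightarrow> real^3 \<Rightarrow> real \<Rightarrow> complex" where
  "geo_z I1 I3 l s = (of_real (cos (norm l / (2 * I1) * s)) + \<i> * of_real (l$3 / norm l * sin (norm l / (2 * I1) * s)))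
     * cis (precession_rate I1 I3 l * s / 2)"

definition geo_w :: "real \<Rightarrow> real \<Rightarrow> real^3 \<Rightarrow> real \<Rightarrow> complex" where
  "geo_w I1 I3 l s = of_real (sin (norm l / (2 * I1) * s)) * ((of_real (l$1) + \<i> * of_real (l$2)) / of_real (norm l))
     * cis (- (precession_rate I1 I3 l * s / 2))"

definition geodesic :: "real \<Rightarrow> real \<Rightarrow> real^3 \<Rightarrow> real \<Rightarrow> (complex^2^2) \<times> (real^3)" where
  "geodesic I1 I3 l s = (su2 (geo_z I1 I3 l s) (geo_w I1 I3 l s), momentum I1 I3 l s)"

lemma su2_flow_geodesic:
  assumes "I1 \<noteq> 0" "l \<noteq> 0"
  shows "su2_flow (\<lambda>_. \<i> * of_real (l$3 / (2 * I3)))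
    (\<lambda>s. of_real (momentum I1 I3 l s $ 1 / (2 * I1)) + \<i> * of_real (momentum I1 I3 l s $ 2 / (2 * I1)))
    (geo_z I1 I3 l) (geo_w I1 I3 l)"
proof -
  define \<nu> where "\<nu> = (of_real (l$1) + \<i> * of_real (l$2)) / of_real (norm l)"
  have "(l$3 / norm l)\<^sup>2 + (cmod \<nu>)\<^sup>2 = ((l$1)\<^sup>2 + (l$2)\<^sup>2 + (l$3)\<^sup>2) / (norm l)\<^sup>2"
    by (simp add: \<nu>_def norm_divide cmod_def power_divide add_divide_distrib)
  also have "\<dots> = 1"
    using assms(2) by (simp add: norm_vec3_sq[symmetric])
  finally have unit: "(l$3 / norm l)\<^sup>2 + (cmod \<nu>)\<^sup>2 = 1" .
  have r: "norm l \<noteq> 0"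
    using assms(2) by simp
  have \<alpha>: "\<i> * of_real (norm l / (2 * I1) * (l$3 / norm l)) + \<i> * of_real (precession_rate I1 I3 l / 2)
      = \<i> * of_real (l$3 / (2 * I3))"
    using assms(1) r by (simp add: precession_rate_def field_simps flip: distrib_left of_real_add)
  have \<beta>: "of_real (norm l / (2 * I1)) * \<nu> * cis (- (precession_rate I1 I3 l * s))
      = of_real (momentum I1 I3 l s $ 1 / (2 * I1)) + \<i> * of_real (momentum I1 I3 l s $ 2 / (2 * I1))" for s
    using momentum_complex[of I1 I3 l s] r assms(1)
    by (simp add: \<nu>_def add_divide_distrib[symmetric] field_simps)
  from su2_flow_rotating_frame[OF su2_flow_constant[OF unit, of "norm l / (2 * I1)"], of "precession_rate I1 I3 l"]
  show ?thesis
    unfolding \<alpha> \<beta> unfolding \<nu>_def geo_z_def[abs_def] geo_w_def[abs_def] .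
qed

lemma vel_mat_momentum:
  "vel_mat I1 I3 (momentum I1 I3 l s) = su2 (\<i> * of_real (l$3 / (2 * I3)))
     (of_real (momentum I1 I3 l s $ 1 / (2 * I1)) + \<i> * of_real (momentum I1 I3 l s $ 2 / (2 * I1)))"
  by (simp add: vel_mat_eq_su2 momentum_nth(3))

lemma ham_traj_geodesic:
  assumes "I1 \<noteq> 0" "l \<noteq> 0"
  shows "ham_traj I1 I3 l (geodesic I1 I3 l)"
  unfolding ham_traj_def
proof (intro conjI allI)
  show "geodesic I1 I3 l 0 = (mat 1, l)"
    by (simp add: geodesic_def geo_z_def geo_w_def momentum_0 su2_one)
  fix s
  show "(geodesic I1 I3 l has_vector_derivative
      (fst (geodesic I1 I3 l s) ** vel_mat I1 I3 (snd (geodesic I1 I3 l s)),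
       coad (vel I1 I3 (snd (geodesic I1 I3 l s))) (snd (geodesic I1 I3 l s)))) (at s)"
    unfolding geodesic_def[abs_def] fst_conv snd_conv vel_mat_momentum
    by (intro has_vector_derivative_Pair su2_flow_has_vector_derivative su2_flow_geodesic
        momentum_has_vector_derivative assms)
qed

lemma ham_traj_unique:
  assumes "ham_traj I1 I3 l \<gamma>" "ham_traj I1 I3 l \<gamma>'"
  shows "\<gamma> = \<gamma>'"
proof
  fix s
  have "fst (\<gamma> s) = fst (\<gamma>' s)"
  proof (rule skew_linear_ode_unique)
    show "inner M (M ** vel_mat I1 I3 (momentum I1 I3 l s)) = 0" for M :: "complex^2^2" and s
      unfolding vel_mat_momentum by (rule inner_mult_su2_skew) simp
    show "((\<lambda>s. fst (\<gamma> s)) has_vector_derivative fst (\<gamma> s) ** vel_mat I1 I3 (momentum I1 I3 l s)) (at s)"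
      "((\<lambda>s. fst (\<gamma>' s)) has_vector_derivative fst (\<gamma>' s) ** vel_mat I1 I3 (momentum I1 I3 l s)) (at s)" for s
      using ham_traj_has_vector_derivative(1)[OF assms(1)] ham_traj_has_vector_derivative(1)[OF assms(2)]
      by (simp_all add: ham_traj_momentum[OF assms(1)] ham_traj_momentum[OF assms(2)])
    show "fst (\<gamma> 0) = fst (\<gamma>' 0)"
      using assms by (simp add: ham_traj_def)
  qed
  then show "\<gamma> s = \<gamma>' s"
    by (simp add: prod_eq_iff ham_traj_momentum[OF assms(1)] ham_traj_momentum[OF assms(2)])
qed

lemma Exp_map_eq:
  assumes "I1 \<noteq> 0" "l \<noteq> 0"
  shows "Exp_map I1 I3 t l = su2 (geo_z I1 I3 l t) (geo_w I1 I3 l t)"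
proof -
  have "(THE \<gamma>. ham_traj I1 I3 l \<gamma>) = geodesic I1 I3 l"
    using ham_traj_geodesic[OF assms] ham_traj_unique by blast
  then show ?thesis
    by (simp add: Exp_map_def geodesic_def)
qed

section \<open>The differential of the exponential map\<close>

lemma geo_coordinates_has_derivative:
  fixes h :: "real^3" and I1 t :: real
  assumes h: "h \<noteq> 0" and I1: "I1 \<noteq> 0"
  defines "r \<equiv> norm h" and "k \<equiv> t / (2 * I1)"
    and "S \<equiv> sin (norm h / (2 * I1) * t)" and "C \<equiv> cos (norm h / (2 * I1) * t)"
    and "dr \<equiv> \<lambda>v. inner h v / norm h"
  shows "((\<lambda>l. cos (norm l / (2 * I1) * t)) has_derivative (\<lambda>v. - S * k * dr v)) (at h)"
    and "((\<lambda>l. l$3 / norm l * sin (norm l / (2 * I1) * t)) has_derivative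
      (\<lambda>v. (v$3 - h$3 / r * dr v) / r * S + h$3 / r * C * k * dr v)) (at h)"
    and "((\<lambda>l. sin (norm l / (2 * I1) * t) / norm l * l$j) has_derivative
      (\<lambda>v. (C * k - S / r) * dr v / r * h$j + S / r * v$j)) (at h)"
  unfolding r_def k_def S_def C_def dr_def using h I1
  by (auto intro!: derivative_eq_intros has_derivative_norm_at bounded_linear.has_derivative[OF bounded_linear_vec_nth]
      simp: fun_eq_iff field_simps power2_eq_square)

text \<open>\<open>dr\<close> and \<open>d\<phi>\<close> are the derivatives of \<open>|h|\<close> and of the precession angle \<open>\<phi>\<close> in the
  direction \<open>v\<close>.\<close>

definition Exp_diff :: "real \<Rightarrow> real \<Rightarrow> real \<Rightarrow> real^3 \<Rightarrow> real^3 \<Rightarrow> complex^2^2" where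
  "Exp_diff I1 I3 t h v = (let r = norm h; k = t / (2 * I1);
     S = sin (norm h / (2 * I1) * t); C = cos (norm h / (2 * I1) * t);
     dr = inner h v / norm h; d\<phi> = precession_rate I1 I3 v * t / 2; \<phi> = precession_rate I1 I3 h * t / 2 in
     su2 ((of_real (- S * k * dr - h$3 / r * S * d\<phi>)
          + \<i> * of_real ((v$3 - h$3 / r * dr) / r * S + h$3 / r * C * k * dr + C * d\<phi>)) * cis \<phi>)
       ((of_real ((C * k - S / r) * dr / r * h$1 + S / r * v$1 + S / r * h$2 * d\<phi>)
          + \<i> * of_real ((C * k - S / r) * dr / r * h$2 + S / r * v$2 - S / r * h$1 * d\<phi>)) * cis (- \<phi>)))"

lemma Exp_map_has_derivative:
  fixes h :: "real^3"
  assumes h: "h \<noteq> 0" and I1: "I1 \<noteq> 0"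
  shows "(Exp_map I1 I3 t has_derivative Exp_diff I1 I3 t h) (at h)"
proof -
  have d\<phi>: "((\<lambda>l. precession_rate I1 I3 l * t / 2) has_derivative (\<lambda>v. precession_rate I1 I3 v * t / 2)) (at h)"
    unfolding precession_rate_def
    by (auto intro!: derivative_eq_intros bounded_linear.has_derivative[OF bounded_linear_vec_nth])
  note c = geo_coordinates_has_derivative[OF h I1, of t]
  note D = su2_has_derivative[OF has_derivative_complex_cis[OF c(1,2) d\<phi>]
      has_derivative_complex_cis[OF c(3)[of 1] c(3)[of 2] has_derivative_minus[OF d\<phi>]]]
  show ?thesis
  proof (rule has_derivative_transform_within_open[OF has_derivative_eq_rhs[OF D], where s = "- {0}"], goal_cases)
    case 1
    show ?case
      by (simp add: fun_eq_iff Exp_diff_def Let_def algebra_simps)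
  next
    case (4 l)
    then show ?case
      using I1 by (simp add: Exp_map_eq geo_z_def geo_w_def add_divide_distrib algebra_simps)
  qed (use h in auto)
qed

definition conj_factor :: "real \<Rightarrow> real \<Rightarrow> real \<Rightarrow> real" where
  "conj_factor \<eta> s \<tau> = (1 + \<eta> * s\<^sup>2) * sin \<tau> + \<eta> * (1 - s\<^sup>2) * \<tau> * cos \<tau>"

text \<open>Eliminating \<open>dr\<close> and the derivative of \<open>h\<^sub>3 / r\<close> leaves
  \<open>conj_factor \<eta> (h\<^sub>3 / r) (k r) * d\<phi> = 0\<close>.\<close>

lemma Exp_diff_kernel_equations_imp_zero:
  fixes h\<^sub>1 h\<^sub>2 h\<^sub>3 v\<^sub>1 v\<^sub>2 v\<^sub>3 r k \<eta> S C dr d\<phi> :: real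
  assumes r: "r > 0" and k: "k > 0" and S: "S \<noteq> 0"
    and F: "(1 + \<eta> * (h\<^sub>3 / r)\<^sup>2) * S + \<eta> * (1 - (h\<^sub>3 / r)\<^sup>2) * (k * r) * C \<noteq> 0"
    and d\<phi>: "d\<phi> = k * \<eta> * v\<^sub>3"
    and z1: "- S * k * dr - h\<^sub>3 / r * S * d\<phi> = 0"
    and z2: "(v\<^sub>3 - h\<^sub>3 / r * dr) / r * S + h\<^sub>3 / r * C * k * dr + C * d\<phi> = 0"
    and w1: "(C * k - S / r) * dr / r * h\<^sub>1 + S / r * v\<^sub>1 + S / r * h\<^sub>2 * d\<phi> = 0"
    and w2: "(C * k - S / r) * dr / r * h\<^sub>2 + S / r * v\<^sub>2 - S / r * h\<^sub>1 * d\<phi> = 0"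
  shows "v\<^sub>1 = 0 \<and> v\<^sub>2 = 0 \<and> v\<^sub>3 = 0"
proof -
  define n3 where "n3 = h\<^sub>3 / r"
  define dn3 where "dn3 = (v\<^sub>3 - n3 * dr) / r"
  have v\<^sub>3: "v\<^sub>3 = r * dn3 + n3 * dr"
    using r by (simp add: dn3_def)
  have "S * (k * dr + n3 * d\<phi>) = 0"
    using z1 unfolding n3_def by argo
  then have kdr: "k * dr = - n3 * d\<phi>"
    using S by simp
  have "S * dn3 + n3 * C * (k * dr) + C * d\<phi> = 0"
    using z2 unfolding dn3_def n3_def by (simp add: algebra_simps)
  then have Sdn3: "S * dn3 = - C * (1 - n3\<^sup>2) * d\<phi>"
    unfolding kdr by (simp add: power2_eq_square algebra_simps)
  have "d\<phi> = \<eta> * (k * r) * dn3 + \<eta> * n3 * (k * dr)"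
    unfolding d\<phi> v\<^sub>3 by (simp add: algebra_simps)
  also have "\<dots> = \<eta> * (k * r) * dn3 - \<eta> * n3\<^sup>2 * d\<phi>"
    unfolding kdr by (simp add: power2_eq_square)
  finally have d\<phi>_dn3: "(1 + \<eta> * n3\<^sup>2) * d\<phi> = \<eta> * (k * r) * dn3"
    by (simp add: algebra_simps)
  have "((1 + \<eta> * n3\<^sup>2) * S + \<eta> * (1 - n3\<^sup>2) * (k * r) * C) * d\<phi>
      = S * ((1 + \<eta> * n3\<^sup>2) * d\<phi>) + \<eta> * (k * r) * (C * (1 - n3\<^sup>2) * d\<phi>)"
    by (simp add: algebra_simps)
  also have "\<dots> = \<eta> * (k * r) * (S * dn3 + C * (1 - n3\<^sup>2) * d\<phi>)"
    unfolding d\<phi>_dn3 by (simp add: algebra_simps)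
  also have "\<dots> = 0"
    using Sdn3 by simp
  finally have "d\<phi> = 0"
    using F by (simp add: n3_def)
  moreover from this have "dr = 0" "dn3 = 0"
    using kdr Sdn3 k S by simp_all
  ultimately show ?thesis
    using v\<^sub>3 w1 w2 S r by simp
qed

lemma inj_Exp_diff:
  fixes h :: "real^3"
  assumes I1: "I1 > 0" and h: "h \<noteq> 0" and t: "t > 0"
    and S: "sin (norm h / (2 * I1) * t) \<noteq> 0"
    and F: "conj_factor (I1 / I3 - 1) (h$3 / norm h) (norm h / (2 * I1) * t) \<noteq> 0"
  shows "inj (Exp_diff I1 I3 t h)"
proof -
  have "linear (Exp_diff I1 I3 t h)"
    by (rule has_derivative_linear[OF Exp_map_has_derivative[OF h]]) (use I1 in simp)
  moreover have "v = 0" if "Exp_diff I1 I3 t h v = 0" for v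
  proof -
    from that have "v$1 = 0 \<and> v$2 = 0 \<and> v$3 = 0"
    proof (intro Exp_diff_kernel_equations_imp_zero[where h\<^sub>1 = "h$1" and h\<^sub>2 = "h$2" and h\<^sub>3 = "h$3"
          and r = "norm h" and k = "t / (2 * I1)" and \<eta> = "I1 / I3 - 1"
          and S = "sin (norm h / (2 * I1) * t)" and C = "cos (norm h / (2 * I1) * t)"
          and dr = "inner h v / norm h" and d\<phi> = "precession_rate I1 I3 v * t / 2"])
      show "precession_rate I1 I3 v * t / 2 = t / (2 * I1) * (I1 / I3 - 1) * v$3"
        using I1 by (cases "I3 = 0") (simp_all add: precession_rate_def field_simps)
      show "(1 + (I1 / I3 - 1) * (h$3 / norm h)\<^sup>2) * sin (norm h / (2 * I1) * t)
        + (I1 / I3 - 1) * (1 - (h$3 / norm h)\<^sup>2) * (t / (2 * I1) * norm h) * cos (norm h / (2 * I1) * t) \<noteq> 0"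
        using F by (simp add: conj_factor_def mult.commute)
    qed (use S h t I1 in \<open>simp_all only: Exp_diff_def Let_def su2_eq_0_iff mult_eq_0_iff cis_neq_zero simp_thms,
        simp_all add: complex_eq_iff\<close>)
    then show "v = 0"
      by (simp add: vec_eq_iff forall_3)
  qed
  ultimately show ?thesis
    by (simp add: linear_injective_0)
qed

section \<open>Bounds on the rescaled time\<close>

text \<open>If \<open>b / (\<eta> s) \<le> \<pi>/2\<close> the second summand is positive there; otherwise it is positive at
  \<open>\<pi>/2\<close>. Either way the intermediate value theorem applies on an interval starting at 0.\<close>

lemma phase_equation_has_root:
  fixes \<eta> s b :: real
  assumes \<eta>: "\<eta> > 0" and s: "s > 0" and b: "0 < b" "b \<le> pi / 2"
  shows "\<exists>\<tau>. 0 < \<tau> \<and> \<tau> \<le> pi / 2 \<and>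
    cos \<tau> * sin (\<tau> * \<eta> * s - b) + s * sin \<tau> * cos (\<tau> * \<eta> * s - b) = 0"
proof -
  define f where "f = (\<lambda>\<tau>. cos \<tau> * sin (\<tau> * \<eta> * s - b) + s * sin \<tau> * cos (\<tau> * \<eta> * s - b))"
  define x where "x = min (b / (\<eta> * s)) (pi / 2)"
  have x: "0 < x" "x \<le> pi / 2"
    using \<eta> s b unfolding x_def by (simp, linarith)
  have "f x > 0"
  proof (cases "b / (\<eta> * s) \<le> pi / 2")
    case True
    then have "x * \<eta> * s - b = 0"
      using \<eta> s by (simp add: x_def)
    then show ?thesis
      using x s by (simp add: f_def sin_gt_zero)
  next
    case False
    then have "pi / 2 * (\<eta> * s) < b"
      using \<eta> s by (simp add: field_simps)
    moreover have "0 < pi / 2 * (\<eta> * s)"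
      using \<eta> s by simp
    ultimately have "- (pi / 2) < pi / 2 * \<eta> * s - b" "pi / 2 * \<eta> * s - b < pi / 2"
      unfolding mult.assoc using b by linarith+
    then show ?thesis
      using False s by (simp add: f_def x_def cos_gt_zero_pi)
  qed
  moreover have "f 0 < 0"
    using b by (simp add: f_def sin_gt_zero)
  moreover have "isCont f \<tau>" for \<tau>
    unfolding f_def by (intro continuous_intros)
  ultimately obtain \<tau> where "0 \<le> \<tau>" "\<tau> \<le> x" "f \<tau> = 0"
    using IVT[of f 0 0 x] x by auto
  moreover from this have "\<tau> \<noteq> 0"
    using \<open>f 0 < 0\<close> by auto
  ultimately show ?thesis
    using x unfolding f_def by (intro exI[of _ \<tau>]) auto
qed

lemma first_pos_root_le:
  assumes "\<tau> > 0" "f \<tau> = 0"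
  shows "first_pos_root f \<le> ereal \<tau>"
  unfolding first_pos_root_def by (rule Inf_lower) (use assms in auto)

lemma tau_ell_le_half_pi:
  fixes p :: int
  assumes \<eta>: "\<eta> > 0" and p: "p \<ge> 2"
  shows "tau_ell \<eta> p s \<le> ereal (pi / 2)"
proof -
  have b: "0 < pi / p" "pi / p \<le> pi / 2"
    using p by (auto simp: field_simps)
  have "\<exists>\<tau>. 0 < \<tau> \<and> \<tau> \<le> pi / 2 \<and> (ell_minus \<eta> p \<tau> s = 0 \<or> ell_plus \<eta> p \<tau> s = 0)"
  proof (cases "s > 0")
    case True
    then show ?thesis
      using phase_equation_has_root[OF \<eta> True b] by (auto simp: ell_minus_def mult.assoc)
  next
    case False
    show ?thesis
    proof (cases "s = 0")
      case True
      then show ?thesis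
        by (intro exI[of _ "pi / 2"]) (simp add: ell_minus_def)
    next
      case False
      with \<open>\<not> s > 0\<close> have "- s > 0"
        by simp
      from phase_equation_has_root[OF \<eta> this b] obtain \<tau> where \<tau>:
        "0 < \<tau>" "\<tau> \<le> pi / 2"
        "cos \<tau> * sin (\<tau> * \<eta> * - s - pi / p) + - s * sin \<tau> * cos (\<tau> * \<eta> * - s - pi / p) = 0"
        by blast
      have "\<tau> * \<eta> * - s - pi / p = - (\<tau> * \<eta> * s + pi / p)"
        by simp
      then have "ell_plus \<eta> p \<tau> s = 0"
        using \<tau>(3) unfolding ell_plus_def by (simp only: sin_minus cos_minus)
      with \<tau> show ?thesis
        by blast
    qed
  qed
  then obtain \<tau> where "0 < \<tau>" "\<tau> \<le> pi / 2" "ell_minus \<eta> p \<tau> s = 0 \<or> ell_plus \<eta> p \<tau> s = 0"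
    by blast
  then have "tau_ell \<eta> p s \<le> ereal \<tau>"
    unfolding tau_ell_def by (auto intro: first_pos_root_le min.coboundedI1 min.coboundedI2)
  also have "\<dots> \<le> ereal (pi / 2)"
    using \<open>\<tau> \<le> pi / 2\<close> by simp
  finally show ?thesis .
qed

lemma less_t_max_imp:
  fixes p :: int
  assumes I1: "I1 > 0" and h: "h \<noteq> 0" and p: "p \<ge> 2" and t: "ereal t < t_max I1 I3 p h"
  shows "norm h / (2 * I1) * t < pi"
    and "I1 / I3 - 1 > 0 \<Longrightarrow> norm h / (2 * I1) * t < pi / 2"
proof -
  define m where "m = min (ereal pi) (tau_ell (I1 / I3 - 1) p (h$3 / norm h))"
  have bound: "norm h / (2 * I1) * t < B" if "m \<le> ereal B" for B
  proof -
    have "ereal t < ereal (2 * I1 / norm h) * m"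
      using t by (simp add: t_max_def m_def)
    also have "\<dots> \<le> ereal (2 * I1 / norm h) * ereal B"
      using that I1 by (intro ereal_mult_left_mono) auto
    finally have "t < 2 * I1 / norm h * B"
      by simp
    then show ?thesis
      using I1 h by (simp add: field_simps)
  qed
  show "norm h / (2 * I1) * t < pi"
    by (rule bound) (simp add: m_def)
  show "norm h / (2 * I1) * t < pi / 2" if "I1 / I3 - 1 > 0"
    using tau_ell_le_half_pi[OF that p] by (intro bound) (simp add: m_def min.coboundedI2)
qed

lemma x_cos_less_sin:
  assumes "0 < x" "x < pi"
  shows "x * cos x < sin x"
proof -
  have "(\<lambda>x. sin x - x * cos x) 0 < (\<lambda>x. sin x - x * cos x) x"
  proof (rule DERIV_pos_imp_increasing_open[OF assms(1)])
    fix y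
    assume "0 < y" "y < x"
    then have "y * sin y > 0"
      using assms by (intro mult_pos_pos sin_gt_zero) auto
    moreover have "DERIV (\<lambda>x. sin x - x * cos x) y :> y * sin y"
      by (rule derivative_eq_intros refl | simp)+
    ultimately show "\<exists>d. DERIV (\<lambda>x. sin x - x * cos x) y :> d \<and> d > 0"
      by blast
  qed (intro continuous_intros)
  then show ?thesis
    by simp
qed

lemma conj_factor_pos:
  assumes \<tau>: "0 < \<tau>" "\<tau> < pi" and s: "s\<^sup>2 \<le> 1" and \<eta>: "- 1 < \<eta>"
    and half: "\<eta> > 0 \<Longrightarrow> \<tau> < pi / 2"
  shows "conj_factor \<eta> s \<tau> > 0"
proof (cases "\<eta> > 0")
  case True
  have "cos \<tau> > 0"
    using half[OF True] \<tau> by (intro cos_gt_zero_pi) auto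
  then show ?thesis
    using True s \<tau> sin_gt_zero[OF \<tau>] by (simp add: conj_factor_def add_pos_nonneg)
next
  case False
  have "\<eta> * (1 - s\<^sup>2) * sin \<tau> \<le> \<eta> * (1 - s\<^sup>2) * (\<tau> * cos \<tau>)"
    using False s x_cos_less_sin[OF \<tau>] by (intro mult_left_mono_neg) (auto simp: mult_nonpos_nonneg)
  moreover have "(1 + \<eta>) * sin \<tau> > 0"
    using \<eta> sin_gt_zero[OF \<tau>] by simp
  ultimately show ?thesis
    by (simp add: conj_factor_def algebra_simps)
qed

theorem mainTheorem7:
  fixes p q :: int and I1 I3 :: real
  assumes "p \<ge> 2" and "coprime p q" and "I1 > 0" and "I3 > 0"
  shows "\<forall>h \<in> C_set I1 I3. \<forall>t. 0 < t \<and> ereal t < t_max I1 I3 p h \<longrightarrow> \<not> conjugate_time I1 I3 h t"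
proof (intro ballI allI impI)
  fix h :: "real^3" and t :: real
  assume "h \<in> C_set I1 I3" and t: "0 < t \<and> ereal t < t_max I1 I3 p h"
  then have h: "h \<noteq> 0"
    by (auto simp: C_set_def)
  define \<tau> where "\<tau> = norm h / (2 * I1) * t"
  have \<tau>: "0 < \<tau>" "\<tau> < pi" "I1 / I3 - 1 > 0 \<Longrightarrow> \<tau> < pi / 2"
    using less_t_max_imp[OF \<open>I1 > 0\<close> h \<open>p \<ge> 2\<close> conjunct2[OF t]] t h \<open>I1 > 0\<close>
    unfolding \<tau>_def by auto
  have "(h$3 / norm h)\<^sup>2 \<le> 1"
    using component_le_norm_cart[of h 3] h by (simp add: power_divide abs_le_square_iff[symmetric])
  moreover have "- 1 < I1 / I3 - 1"
    using \<open>I1 > 0\<close> \<open>I3 > 0\<close> by simp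
  ultimately have "conj_factor (I1 / I3 - 1) (h$3 / norm h) \<tau> \<noteq> 0"
    using conj_factor_pos[OF \<tau>(1,2)] \<tau>(3) by (metis less_irrefl)
  moreover have "sin \<tau> \<noteq> 0"
    using sin_gt_zero[OF \<tau>(1,2)] by simp
  ultimately have "inj (Exp_diff I1 I3 t h)"
    using inj_Exp_diff[OF \<open>I1 > 0\<close> h conjunct1[OF t]] unfolding \<tau>_def by blast
  moreover have "(Exp_map I1 I3 t has_derivative Exp_diff I1 I3 t h) (at h)"
    using Exp_map_has_derivative[OF h] \<open>I1 > 0\<close> by simp
  ultimately show "\<not> conjugate_time I1 I3 h t"
    unfolding conjugate_time_def by blast
qed

end
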